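(* Let $(\mathcal G_t)\subseteq(\mathcal F_t)$ be a filtration, $(\rho^n)_{n\ge1}\subset\tilde{\mathcal A}^\circ(\mathcal G_t)$ and $\rho\in\tilde{\mathcal A}^\circ(\mathcal G_t)$ with $$\mathbb P\big(\{\omega:\lim_{n\to\infty}\rho^n_t(\omega)=\rho_t(\omega)\text{ for all }t\in C_\rho(\omega)\cup\{T\}\}\big)=1.$$ Let $\theta$ be an $\mathcal F$-measurable random variable with values in $(0,T]$ and $X$ an $\mathcal F$-measurable random variable with values in $[0,\infty)$ and $\mathbb E[X]<\infty$. Then $$\limsup_{n\to\infty}\mathbb E\Big[\int_{[0,T]}1_{\{t\ge\theta\}}X\,d\rho^n_t\Big]\le\mathbb E\Big[\int_{[0,T]}1_{\{t\ge\theta\}}X\,d\rho_t\Big].$$ If moreover $\mathbb P(\{\omega:\theta(\omega)\in C_\rho(\omega)\text{ or }X(\omega)=0\})=1$, then the limit exists and equality holds.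
   Context: $(\Omega,\mathcal F,\mathbb P)$ complete probability space with filtration $(\mathcal F_t)_{t\in[0,T]}$, $T\in(0,\infty]$. $\tilde{\mathcal A}^\circ(\mathcal G_t)$ is the set of $(\mathcal G_t)$-adapted processes $\rho$ with, for all $\omega$, $t\mapsto\rho_t(\omega)$ càdlàg non-decreasing, $\rho_{0-}=0$ and $\rho_T\le1$. For a càdlàg process $X$, $C_X(\omega)=\{t\in[0,T]:X_{t-}(\omega)=X_t(\omega)\}$. Integrals are pathwise Lebesgue–Stieltjes. *)

theory Defs
  imports "HOL-Probability.Probability"
begin

definition filtration_on :: "'a measure \<Rightarrow> ereal \<Rightarrow> (ereal \<Rightarrow> 'a measure) \<Rightarrow> bool" where
  "filtration_on M T F \<longleftrightarrow>
     (\<forall>t\<in>{0..T}. space (F t) = space M \<and> sets (F t) \<subseteq> sets M) \<and>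
     (\<forall>s\<in>{0..T}. \<forall>t\<in>{0..T}. s \<le> t \<longrightarrow> sets (F s) \<subseteq> sets (F t))"

text \<open>Sample path extended by the convention rho_{0-} = 0 (value 0 before time 0)
  and kept constant after T (so that it carries no mass outside [0,T]).\<close>
definition path_ext :: "ereal \<Rightarrow> (ereal \<Rightarrow> real) \<Rightarrow> ereal \<Rightarrow> real" where
  "path_ext T f t = (if t < 0 then 0 else if t \<le> T then f t else f T)"

text \<open>Left limit X_{t-} of a path; at t = 0 this is the convention value 0.\<close>
definition left_lim :: "ereal \<Rightarrow> (ereal \<Rightarrow> real) \<Rightarrow> ereal \<Rightarrow> real" where
  "left_lim T f t = Lim (at_left t) (path_ext T f)"

definition cont_points :: "ereal \<Rightarrow> (ereal \<Rightarrow> real) \<Rightarrow> ereal set" where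
  "cont_points T f = {t \<in> {0..T}. left_lim T f t = f t}"

text \<open>Lebesgue--Stieltjes measure of a path on ereal: mass F(b) - F(a) on (a,b],
  where F is the extended path (so the mass at 0 is f 0 = f 0 - f(0-)).\<close>
definition ls_measure :: "ereal \<Rightarrow> (ereal \<Rightarrow> real) \<Rightarrow> ereal measure" where
  "ls_measure T f = extend_measure UNIV {(a, b). a \<le> b} (\<lambda>(a, b). {a<..b})
      (\<lambda>(a, b). ennreal (path_ext T f b - path_ext T f a))"

definition ls_int :: "ereal \<Rightarrow> (ereal \<Rightarrow> real) \<Rightarrow> (ereal \<Rightarrow> real) \<Rightarrow> real" where
  "ls_int T f g = (\<integral>t. indicator {0..T} t * g t \<partial>ls_measure T f)"

text \<open>The class tilde-A-circ(G_t): G-adapted, every path cadlag and non-decreasing on [0,T],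
  rho_{0-} = 0 (built into path_ext; together with monotonicity this forces rho_0 >= 0),
  and rho_T <= 1.\<close>
definition A_circ :: "'a measure \<Rightarrow> ereal \<Rightarrow> (ereal \<Rightarrow> 'a measure) \<Rightarrow> (ereal \<Rightarrow> 'a \<Rightarrow> real) \<Rightarrow> bool" where
  "A_circ M T G \<rho> \<longleftrightarrow>
     (\<forall>t\<in>{0..T}. \<rho> t \<in> borel_measurable (G t)) \<and>
     (\<forall>\<omega>. mono_on {0..T} (\<lambda>t. \<rho> t \<omega>) \<and> 0 \<le> \<rho> 0 \<omega> \<and> \<rho> T \<omega> \<le> 1 \<and>
        (\<forall>t\<in>{0..<T}. ((\<lambda>s. \<rho> s \<omega>) \<longlongrightarrow> \<rho> t \<omega>) (at_right t)) \<and>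
        (\<forall>t\<in>{0<..T}. \<exists>l. ((\<lambda>s. \<rho> s \<omega>) \<longlongrightarrow> l) (at_left t)))"

end

theory Submission
  imports Defs
begin

text \<open>
  For a path \<rho> of the class, the pathwise integral of 1_{t \<ge> \<theta>} X over [0,T] equals
  X (\<rho>_T - \<rho>_{\<theta>-}), a number in [0, X]. The values \<rho>^n_T converge by assumption.
  The left limit \<rho>_{\<theta>-} is approximated by values \<rho>_s at continuity points s < \<theta>, which
  exist because a monotone path has only countably many jumps, and \<rho>^n_{\<theta>-} \<ge> \<rho>^n_s \<rightarrow> \<rho>_s;
  hence liminf \<rho>^n_{\<theta>-} \<ge> \<rho>_{\<theta>-}, so the limsup of the integrands is at most the limit
  integrand. If \<theta> is a continuity point, moreover \<rho>^n_{\<theta>-} \<le> \<rho>^n_\<theta> \<rightarrow> \<rho>_\<theta> = \<rho>_{\<theta>-}, so the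
  integrands converge. Dominated convergence with dominating function X (for the limsup,
  applied to the maximum of each integrand and the limit integrand) concludes.

  The Lebesgue--Stieltjes measure of a path, which the definition only describes on intervals,
  is realised as the image of Lebesgue measure under the quantile function of the path.
\<close>

lemma at_left_neq_bot: "a < b \<Longrightarrow> at_left (b::'a::{dense_linorder,linorder_topology}) \<noteq> bot"
  by (auto simp: trivial_limit_def eventually_at_left dest: dense)

lemma at_right_neq_bot: "a < b \<Longrightarrow> at_right (a::'a::{dense_linorder,linorder_topology}) \<noteq> bot"
  by (auto simp: trivial_limit_def eventually_at_right dest: dense)

lemma ereal_incseq_tendsto_from_below:
  assumes "(0::ereal) < \<theta>"
  obtains s where "incseq s" "\<And>k. 0 \<le> s k" "\<And>k. s k < \<theta>" "s \<longlonglongrightarrow> \<theta>"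
proof (cases \<theta>)
  case (real r)
  then have r: "0 < r" using assms by simp
  define s where "s k = ereal (r - r / real (Suc k))" for k
  have "(\<lambda>k. r - r / real (Suc k)) \<longlonglongrightarrow> r - r * 0"
    unfolding divide_inverse by (intro tendsto_intros LIMSEQ_inverse_real_of_nat)
  then have "s \<longlonglongrightarrow> \<theta>" unfolding s_def real by (intro tendsto_ereal) simp
  moreover have "incseq s" unfolding s_def incseq_def
    using r by (auto intro!: divide_left_mono simp: field_simps)
  ultimately show thesis using that r by (auto simp: s_def real field_simps)
next
  case PInf
  have "(\<lambda>k. ereal (real k)) \<longlonglongrightarrow> \<theta>"
    unfolding PInf by (simp add: filterlim_real_sequentially tendsto_PInfty_eq_at_top)
  then show thesis using that[of "\<lambda>k. ereal (real k)"] PInf by (auto simp: incseq_def)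
next
  case MInf
  then show thesis using assms by simp
qed

lemma INT_greaterThanAtMost_eq:
  fixes s :: "nat \<Rightarrow> 'a::linorder_topology"
  assumes "\<And>k. s k < \<theta>" "s \<longlonglongrightarrow> \<theta>"
  shows "(\<Inter>k. {s k<..b}) = {\<theta>..b}"
proof (intro set_eqI iffI)
  fix t assume t: "t \<in> (\<Inter>k. {s k<..b})"
  have "\<theta> \<le> t"
  proof (rule ccontr)
    assume "\<not> \<theta> \<le> t"
    then have "eventually (\<lambda>k. t < s k) sequentially"
      using order_tendstoD(1)[OF assms(2)] by simp
    then obtain k where "t < s k" by (auto dest: eventually_happens)
    moreover have "s k < t" using t by simp
    ultimately show False by simp
  qed
  then show "t \<in> {\<theta>..b}" using t by simp
qed (use assms(1) in \<open>auto intro: less_le_trans\<close>)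

lemma ereal_Rats_dense:
  assumes "ereal r < \<theta>"
  obtains q where "q \<in> \<rat>" "r < q" "ereal q < \<theta>"
proof (cases \<theta>)
  case (real t)
  then show ?thesis using Rats_dense_in_real[of r t] assms that by auto
next
  case PInf
  then show ?thesis using Rats_dense_in_real[of r "r + 1"] that by auto
qed (use assms in auto)

section \<open>Sample paths\<close>

definition A_circ_path :: "ereal \<Rightarrow> (ereal \<Rightarrow> real) \<Rightarrow> bool" where
  "A_circ_path T f \<longleftrightarrow> mono_on {0..T} f \<and> 0 \<le> f 0 \<and> f T \<le> 1 \<and>
     (\<forall>t\<in>{0..<T}. (f \<longlongrightarrow> f t) (at_right t)) \<and> (\<forall>t\<in>{0<..T}. \<exists>l. (f \<longlongrightarrow> l) (at_left t))"

lemma A_circ_sample_path: "A_circ M T G \<rho> \<Longrightarrow> A_circ_path T (\<lambda>s. \<rho> s \<omega>)"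
  by (simp add: A_circ_def A_circ_path_def)

lemma path_ext_eq: "0 \<le> s \<Longrightarrow> s \<le> T \<Longrightarrow> path_ext T f s = f s"
  by (simp add: path_ext_def not_less)

context
  fixes T :: ereal and f :: "ereal \<Rightarrow> real"
  assumes path: "A_circ_path T f" and T_pos: "0 < T"
begin

lemma path_mono: "x \<in> {0..T} \<Longrightarrow> y \<in> {0..T} \<Longrightarrow> x \<le> y \<Longrightarrow> f x \<le> f y"
  using path unfolding A_circ_path_def mono_on_def by blast

lemma path_nonneg: "x \<in> {0..T} \<Longrightarrow> 0 \<le> f x"
  using path_mono[of 0 x] path T_pos unfolding A_circ_path_def by fastforce

lemma path_le_end: "x \<in> {0..T} \<Longrightarrow> f x \<le> f T"
  using path_mono[of x T] by auto

lemma path_end_le_1: "f T \<le> 1"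
  using path unfolding A_circ_path_def by simp

lemma path_ext_infinity: "path_ext T f \<infinity> = f T"
  using T_pos by (simp add: path_ext_def)

lemma path_ext_nonneg: "0 \<le> path_ext T f x"
  using path_nonneg[of x] path_nonneg[of T] T_pos by (auto simp: path_ext_def)

lemma path_ext_le_end: "path_ext T f x \<le> f T"
  using path_le_end[of x] path_nonneg[of T] T_pos by (auto simp: path_ext_def)

lemma path_ext_mono: "x \<le> y \<Longrightarrow> path_ext T f x \<le> path_ext T f y"
  using path_mono[of x y] path_nonneg[of y] path_ext_nonneg[of y] path_ext_le_end[of x]
  by (auto simp: path_ext_def not_less)

lemma tendsto_path_ext_at_right: "(path_ext T f \<longlongrightarrow> path_ext T f t) (at_right t)"
proof -
  consider "t < 0" | "0 \<le> t" "t < T" | "T \<le> t" by force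
  then show ?thesis
  proof cases
    case 1
    have "eventually (\<lambda>s. path_ext T f s = path_ext T f t) (at_right t)"
      using 1 by (intro eventually_at_rightI[of t 0]) (auto simp: path_ext_def)
    then show ?thesis by (rule tendsto_eventually)
  next
    case 2
    have "eventually (\<lambda>s. f s = path_ext T f s) (at_right t)"
      using 2 by (intro eventually_at_rightI[of t T]) (auto simp: path_ext_eq)
    moreover have "(f \<longlongrightarrow> f t) (at_right t)"
      using path 2 unfolding A_circ_path_def by auto
    ultimately show ?thesis using 2 by (simp add: path_ext_eq tendsto_cong)
  next
    case 3
    have "eventually (\<lambda>s. t < s) (at_right t)"
      by (simp add: eventually_at_filter)
    then have "eventually (\<lambda>s. path_ext T f s = path_ext T f t) (at_right t)"
      by eventually_elim (use 3 T_pos in \<open>auto simp: path_ext_def\<close>)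
    then show ?thesis by (rule tendsto_eventually)
  qed
qed

lemma tendsto_left_lim:
  assumes "0 < \<theta>" "\<theta> \<le> T"
  shows "(path_ext T f \<longlongrightarrow> left_lim T f \<theta>) (at_left \<theta>)"
proof -
  have "\<theta> \<in> {0<..T}" using assms by simp
  then obtain l where l: "(f \<longlongrightarrow> l) (at_left \<theta>)"
    using path unfolding A_circ_path_def by blast
  have "eventually (\<lambda>s. f s = path_ext T f s) (at_left \<theta>)"
  proof (rule eventually_at_leftI[of 0])
    fix s assume "s \<in> {0<..<\<theta>}"
    then have "0 \<le> s" "s \<le> T" using assms by auto
    then show "f s = path_ext T f s" by (simp add: path_ext_eq)
  qed (use assms in simp)
  with l have "(path_ext T f \<longlongrightarrow> l) (at_left \<theta>)"
    using tendsto_cong by blast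
  moreover then have "left_lim T f \<theta> = l"
    unfolding left_lim_def using at_left_neq_bot[OF assms(1)] by (intro tendsto_Lim) auto
  ultimately show ?thesis by simp
qed

lemma left_lim_le:
  assumes "0 < \<theta>" "\<theta> \<le> T"
  shows "left_lim T f \<theta> \<le> f \<theta>"
proof (rule tendsto_upperbound[OF tendsto_left_lim[OF assms]])
  have "eventually (\<lambda>s. s < \<theta>) (at_left \<theta>)"
    by (simp add: eventually_at_filter)
  then show "eventually (\<lambda>s. path_ext T f s \<le> f \<theta>) (at_left \<theta>)"
  proof eventually_elim
    case (elim s)
    then show ?case
      using path_ext_mono[of s \<theta>] path_ext_eq[of \<theta>] assms by simp
  qed
qed (use at_left_neq_bot[OF assms(1)] in auto)

lemma le_left_lim:
  assumes "0 < \<theta>" "\<theta> \<le> T" "0 \<le> s" "s < \<theta>"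
  shows "f s \<le> left_lim T f \<theta>"
proof (rule tendsto_lowerbound[OF tendsto_left_lim[OF assms(1,2)]])
  show "eventually (\<lambda>u. f s \<le> path_ext T f u) (at_left \<theta>)"
  proof (rule eventually_at_leftI[of s])
    fix u assume "u \<in> {s<..<\<theta>}"
    then have "s \<le> u" "s \<le> T" using assms by auto
    then show "f s \<le> path_ext T f u"
      using assms path_ext_mono[of s u] path_ext_eq[of s] by simp
  qed (use assms in simp)
qed (use at_left_neq_bot[OF assms(1)] in auto)

lemma left_lim_nonneg:
  assumes "0 < \<theta>" "\<theta> \<le> T"
  shows "0 \<le> left_lim T f \<theta>"
proof -
  have "0 \<le> f 0" using T_pos by (intro path_nonneg) simp
  also have "f 0 \<le> left_lim T f \<theta>" using assms by (intro le_left_lim) auto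
  finally show ?thesis .
qed

lemma path_jump_bounds:
  assumes "0 < \<theta>" "\<theta> \<le> T"
  shows "0 \<le> f T - left_lim T f \<theta>" "f T - left_lim T f \<theta> \<le> 1"
proof -
  have "f \<theta> \<le> f T" using assms by (intro path_le_end) simp
  then show "0 \<le> f T - left_lim T f \<theta>" "f T - left_lim T f \<theta> \<le> 1"
    using left_lim_le[OF assms] left_lim_nonneg[OF assms] path_end_le_1 by linarith+
qed

lemma isCont_imp_cont_point:
  assumes "0 < x" "ereal x \<le> T" "isCont (\<lambda>x. f (ereal x)) x"
  shows "ereal x \<in> cont_points T f"
proof -
  have "left_lim T f (ereal x) = f (ereal x)"
  proof (rule antisym)
    show "left_lim T f (ereal x) \<le> f (ereal x)"
      using assms(1,2) by (intro left_lim_le) auto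
    have "(\<lambda>k. x - inverse (real (Suc k))) \<longlonglongrightarrow> x - 0"
      by (intro tendsto_intros LIMSEQ_inverse_real_of_nat)
    then have lim: "(\<lambda>k. x - inverse (real (Suc k))) \<longlonglongrightarrow> x" by simp
    then have "(\<lambda>k. f (ereal (x - inverse (real (Suc k))))) \<longlonglongrightarrow> f (ereal x)"
      using isCont_tendsto_compose[OF assms(3)] by blast
    moreover have "eventually (\<lambda>k. 0 < x - inverse (real (Suc k))) sequentially"
      using order_tendstoD(1)[OF lim assms(1)] .
    then have "eventually (\<lambda>k. f (ereal (x - inverse (real (Suc k)))) \<le> left_lim T f (ereal x))
        sequentially"
      by eventually_elim (use assms(1,2) in \<open>auto intro!: le_left_lim\<close>)
    ultimately show "f (ereal x) \<le> left_lim T f (ereal x)"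
      by (rule tendsto_upperbound) simp
  qed
  then show ?thesis using assms(1,2) by (simp add: cont_points_def)
qed

section \<open>The Lebesgue--Stieltjes measure of a path\<close>

lemma Inf_superlevel_set_le_iff:
  assumes "0 < u" "u \<le> f T"
  shows "Inf {t. u \<le> path_ext T f t} \<le> b \<longleftrightarrow> u \<le> path_ext T f b"
proof
  assume "u \<le> path_ext T f b"
  then show "Inf {t. u \<le> path_ext T f t} \<le> b" by (intro Inf_lower) simp
next
  define q where "q = Inf {t. u \<le> path_ext T f t}"
  assume "Inf {t. u \<le> path_ext T f t} \<le> b"
  then have "path_ext T f q \<le> path_ext T f b"
    unfolding q_def by (rule path_ext_mono)
  moreover have "u \<le> path_ext T f q"
  proof (cases "q = \<infinity>")
    case True
    then show ?thesis using assms path_ext_infinity by simp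
  next
    case False
    have "eventually (\<lambda>s. q < s) (at_right q)"
      by (simp add: eventually_at_filter)
    then have "eventually (\<lambda>s. u \<le> path_ext T f s) (at_right q)"
    proof eventually_elim
      case (elim s)
      then obtain t where "u \<le> path_ext T f t" "t < s"
        unfolding q_def Inf_less_iff by auto
      then show ?case using path_ext_mono[of t s] by (meson less_imp_le order_trans)
    qed
    then show ?thesis
      using tendsto_path_ext_at_right[of q] at_right_neq_bot[of q \<infinity>] False
      by (intro tendsto_lowerbound) (auto simp: less_top)
  qed
  ultimately show "u \<le> path_ext T f b" by simp
qed

text \<open>Outside \<open>(0, f T]\<close> the quantile is sent to \<open>-\<infinity>\<close>, which lies in no interval \<open>{a<..b}\<close>.\<close>
definition path_quantile :: "real \<Rightarrow> ereal" where
  "path_quantile u = (if u \<in> {0<..f T} then Inf {t. u \<le> path_ext T f t} else -\<infinity>)"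

lemma path_quantile_measurable: "path_quantile \<in> borel_measurable lborel"
proof (rule borel_measurableI_le)
  fix y
  have "{u \<in> space lborel. path_quantile u \<le> y} = - {0<..f T} \<union> ({0<..f T} \<inter> {..path_ext T f y})"
    using Inf_superlevel_set_le_iff by (auto simp: path_quantile_def)
  then show "{u \<in> space lborel. path_quantile u \<le> y} \<in> sets lborel" by simp
qed

lemma emeasure_distr_path_quantile_Ioc:
  assumes "a \<le> b"
  shows "emeasure (distr lborel borel path_quantile) {a<..b}
    = ennreal (path_ext T f b - path_ext T f a)"
proof -
  have "path_quantile u \<in> {a<..b} \<longleftrightarrow> u \<in> {path_ext T f a<..path_ext T f b}" for u
  proof (cases "u \<in> {0<..f T}")
    case True
    then have "path_quantile u = Inf {t. u \<le> path_ext T f t}"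
      by (simp add: path_quantile_def)
    moreover have "Inf {t. u \<le> path_ext T f t} \<le> c \<longleftrightarrow> u \<le> path_ext T f c" for c
      using True by (intro Inf_superlevel_set_le_iff) auto
    ultimately show ?thesis unfolding greaterThanAtMost_iff by (metis not_le)
  next
    case False
    then show ?thesis
      using path_ext_nonneg[of a] path_ext_le_end[of b]
      by (auto simp: path_quantile_def)
  qed
  then have "path_quantile -` {a<..b} \<inter> space lborel = {path_ext T f a<..path_ext T f b}"
    by (auto simp del: greaterThanAtMost_iff)
  moreover have "path_quantile \<in> measurable lborel borel"
    using path_quantile_measurable by simp
  ultimately show ?thesis
    using path_ext_mono[OF assms] by (simp add: emeasure_distr)
qed

lemma sets_ls_measure:
  "sets (ls_measure T f) = sigma_sets UNIV ((\<lambda>(a, b). {a<..b}) ` {(a, b). a \<le> b})"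
  unfolding ls_measure_def by (rule sets_extend_measure) auto

lemma Ioc_in_sets_ls_measure: "{a<..b} \<in> sets (ls_measure T f)"
proof (cases "a \<le> b")
  case True
  then show ?thesis unfolding sets_ls_measure by (intro sigma_sets.Basic) auto
qed simp

lemma emeasure_ls_measure_Ioc:
  assumes "a \<le> b"
  shows "emeasure (ls_measure T f) {a<..b} = ennreal (path_ext T f b - path_ext T f a)"
proof (rule emeasure_extend_measure_Pair[OF ls_measure_def,
      where \<mu>' = "emeasure (distr lborel borel path_quantile)"])
  have "sigma_sets (space borel) ((\<lambda>(a, b). {a<..b::ereal}) ` {(a, b). a \<le> b}) \<subseteq> sets borel"
    by (intro sets.sigma_sets_subset) auto
  then have sets_sub: "sets (ls_measure T f) \<subseteq> sets (distr lborel borel path_quantile)"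
    unfolding sets_ls_measure by simp
  show "countably_additive (sets (ls_measure T f)) (emeasure (distr lborel borel path_quantile))"
    unfolding countably_additive_def
  proof (intro allI impI)
    fix A :: "nat \<Rightarrow> ereal set"
    assume "range A \<subseteq> sets (ls_measure T f)" "disjoint_family A"
    then show "(\<Sum>i. emeasure (distr lborel borel path_quantile) (A i)) =
        emeasure (distr lborel borel path_quantile) (\<Union> (range A))"
      using sets_sub by (intro suminf_emeasure) auto
  qed
qed (use assms emeasure_distr_path_quantile_Ioc in \<open>auto simp: positive_def\<close>)

lemma emeasure_ls_measure_Icc:
  assumes "0 < \<theta>" "\<theta> \<le> T"
  shows "{\<theta>..T} \<in> sets (ls_measure T f)"
    and "emeasure (ls_measure T f) {\<theta>..T} = ennreal (f T - left_lim T f \<theta>)"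
proof -
  obtain s where s: "incseq s" "\<And>k. 0 \<le> s k" "\<And>k. s k < \<theta>" "s \<longlonglongrightarrow> \<theta>"
    using ereal_incseq_tendsto_from_below[OF assms(1)] by blast
  have s_le_T: "s k \<le> T" for k
    using s(3)[of k] assms(2) by simp
  define A where "A k = {s k<..T}" for k
  have Inter_A: "(\<Inter>k. A k) = {\<theta>..T}"
    unfolding A_def using s(3,4) by (rule INT_greaterThanAtMost_eq)
  have A_sets: "range A \<subseteq> sets (ls_measure T f)"
    by (auto simp: A_def Ioc_in_sets_ls_measure)
  have "decseq A" unfolding decseq_def A_def
  proof (intro allI impI subsetI)
    fix m n t assume "m \<le> n" "t \<in> {s n<..T}"
    then show "t \<in> {s m<..T}"
      using incseqD[OF s(1) \<open>m \<le> n\<close>] by (auto intro: le_less_trans)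
  qed
  have emeasure_A: "emeasure (ls_measure T f) (A k) = ennreal (f T - f (s k))" for k
    using emeasure_ls_measure_Ioc[OF s_le_T[of k]] s(2)[of k] s_le_T[of k] T_pos
    by (simp add: A_def path_ext_eq)
  show "{\<theta>..T} \<in> sets (ls_measure T f)"
    using A_sets by (auto simp: Inter_A[symmetric])
  have "filterlim s (at_left \<theta>) sequentially"
    using s(3,4) by (intro tendsto_imp_filterlim_at_left) auto
  then have "(\<lambda>k. path_ext T f (s k)) \<longlonglongrightarrow> left_lim T f \<theta>"
    by (rule filterlim_compose[OF tendsto_left_lim[OF assms]])
  then have "(\<lambda>k. ennreal (f T - f (s k))) \<longlonglongrightarrow> ennreal (f T - left_lim T f \<theta>)"
    using s(2) s_le_T by (simp add: path_ext_eq tendsto_intros)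
  moreover have "(\<lambda>k. ennreal (f T - f (s k))) \<longlonglongrightarrow> emeasure (ls_measure T f) {\<theta>..T}"
    using Lim_emeasure_decseq[OF A_sets \<open>decseq A\<close>] by (simp add: emeasure_A Inter_A)
  ultimately show "emeasure (ls_measure T f) {\<theta>..T} = ennreal (f T - left_lim T f \<theta>)"
    by (rule LIMSEQ_unique[rotated])
qed

lemma ls_int_indicator_atLeast:
  assumes "0 < \<theta>" "\<theta> \<le> T"
  shows "ls_int T f (\<lambda>t. indicator {\<theta>..} t * x) = x * (f T - left_lim T f \<theta>)"
proof -
  have "(\<lambda>t. indicator {0..T} t * (indicator {\<theta>..} t * x)) = (\<lambda>t. x * indicator {\<theta>..T} t)"
  proof
    fix t :: ereal
    have "t \<in> {0..T} \<and> t \<in> {\<theta>..} \<longleftrightarrow> t \<in> {\<theta>..T}"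
      using order_trans[OF less_imp_le[OF assms(1)], of t] by auto
    then show "indicator {0..T} t * (indicator {\<theta>..} t * x) = x * indicator {\<theta>..T} t"
      by (auto simp: indicator_def)
  qed
  moreover have "measure (ls_measure T f) {\<theta>..T} = f T - left_lim T f \<theta>"
    using emeasure_ls_measure_Icc[OF assms] path_jump_bounds[OF assms]
    by (simp add: measure_def)
  ultimately show ?thesis
    unfolding ls_int_def integral_mult_right_zero
    using emeasure_ls_measure_Icc[OF assms] by (simp add: integral_indicator)
qed

lemma norm_ls_int_indicator_atLeast_le:
  assumes "0 < \<theta>" "\<theta> \<le> T" "0 \<le> x"
  shows "norm (ls_int T f (\<lambda>t. indicator {\<theta>..} t * x)) \<le> x"
  using ls_int_indicator_atLeast[OF assms(1,2)] path_jump_bounds[OF assms(1,2)] assms(3)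
  by (simp add: abs_mult mult_left_le)

text \<open>The clipping \<open>min q T\<close> makes every term a value of the path at a fixed time in \<open>[0,T]\<close>.\<close>
lemma left_lim_eq_SUP_Rats:
  assumes "0 < \<theta>" "\<theta> \<le> T"
  shows "ereal (left_lim T f \<theta>) =
    (SUP q\<in>{q\<in>\<rat>. 0 \<le> q}. if ereal q < \<theta> then ereal (f (min (ereal q) T)) else 0)"
    (is "_ = ?S")
proof (rule antisym)
  show "ereal (left_lim T f \<theta>) \<le> ?S"
  proof (rule dense_le)
    fix c assume "c < ereal (left_lim T f \<theta>)"
    moreover have "((\<lambda>s. ereal (path_ext T f s)) \<longlongrightarrow> ereal (left_lim T f \<theta>)) (at_left \<theta>)"
      using tendsto_left_lim[OF assms] by (rule tendsto_ereal)
    ultimately have "eventually (\<lambda>s. c < ereal (path_ext T f s)) (at_left \<theta>)"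
      by (rule order_tendstoD(1)[rotated])
    moreover have "eventually (\<lambda>s. 0 < s \<and> s < \<theta>) (at_left \<theta>)"
      using assms(1) by (intro eventually_at_leftI[of 0]) auto
    ultimately have "eventually (\<lambda>s. c < ereal (path_ext T f s) \<and> 0 < s \<and> s < \<theta>) (at_left \<theta>)"
      by eventually_elim simp
    then obtain s where s: "c < ereal (path_ext T f s)" "0 < s" "s < \<theta>"
      using eventually_happens'[OF at_left_neq_bot[OF assms(1)]] by blast
    then obtain r where "s = ereal r" by (cases s) auto
    with s have r: "c < ereal (path_ext T f (ereal r))" "0 < r" "ereal r < \<theta>" by auto
    obtain q where q: "q \<in> \<rat>" "r < q" "ereal q < \<theta>"
      using ereal_Rats_dense[OF r(3)] .
    have "ereal q \<le> T" using q(3) assms(2) by simp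
    have "ereal r \<le> T" using r(3) assms(2) by simp
    then have "c < ereal (f (ereal r))"
      using r path_ext_eq[of "ereal r"] by simp
    also have "\<dots> \<le> ereal (f (ereal q))"
      using r(2) q(2) \<open>ereal q \<le> T\<close> \<open>ereal r \<le> T\<close> path_mono[of "ereal r" "ereal q"]
      by simp
    also have "\<dots> \<le> ?S"
      using q r(2) \<open>ereal q \<le> T\<close> by (intro SUP_upper2[of q]) (auto simp: min_absorb1)
    finally show "c \<le> ?S" by simp
  qed
next
  show "?S \<le> ereal (left_lim T f \<theta>)"
  proof (rule SUP_least)
    fix q :: real assume "q \<in> {q\<in>\<rat>. 0 \<le> q}"
    then show "(if ereal q < \<theta> then ereal (f (min (ereal q) T)) else 0) \<le> ereal (left_lim T f \<theta>)"
      using le_left_lim[OF assms, of q] left_lim_nonneg[OF assms] assms(2)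
      by (auto simp: min_absorb1)
  qed
qed

end

section \<open>Convergence of left limits\<close>

text \<open>A monotone function has only countably many discontinuities, but every nonempty open
  interval is uncountable.\<close>
lemma cont_point_between:
  assumes path: "A_circ_path T f" and T_pos: "0 < T" and "b < \<theta>" "0 < \<theta>" "\<theta> \<le> T"
  obtains x where "ereal x \<in> cont_points T f" "b < ereal x" "ereal x < \<theta>" "0 < x"
proof -
  have "max b 0 < \<theta>" using assms(3,4) by simp
  then obtain lo where lo: "ereal lo = max b 0"
    by (cases "max b 0") auto
  define hi where "hi = (if \<theta> = \<infinity> then lo + 1 else real_of_ereal \<theta>)"
  have between: "max b 0 < ereal x \<and> ereal x < \<theta>" if "x \<in> {lo<..<hi}" for x
  proof
    show "max b 0 < ereal x" using that lo by (metis greaterThanLessThan_iff less_ereal.simps(1))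
    show "ereal x < \<theta>" using that assms(4) by (cases \<theta>) (auto simp: hi_def)
  qed
  have in_dom: "ereal x \<in> {0..T}" if "x \<in> {lo<..<hi}" for x
    using between[OF that] assms(5) by (auto intro: less_imp_le)
  have "ereal lo < \<theta>" using lo \<open>max b 0 < \<theta>\<close> by simp
  then have "lo < hi" by (cases \<theta>) (auto simp: hi_def)
  have "mono_on {lo<..<hi} (\<lambda>x. f (ereal x))"
    using in_dom by (auto simp: mono_on_def intro!: path_mono[OF path T_pos])
  then have "countable {x \<in> {lo<..<hi}. \<not> isCont (\<lambda>x. f (ereal x)) x}"
    by (intro mono_on_ctble_discont_open) auto
  moreover have "uncountable {lo<..<hi}"
    using \<open>lo < hi\<close> by (simp add: uncountable_open_interval)
  ultimately obtain x where x: "x \<in> {lo<..<hi}" "isCont (\<lambda>x. f (ereal x)) x"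
    by (metis (mono_tags, lifting) countable_subset mem_Collect_eq subsetI)
  have x_pos: "0 < x" and x_le_T: "ereal x \<le> T"
    using between[OF x(1)] in_dom[OF x(1)] by auto
  then show thesis
    using that[of x] between[OF x(1)] isCont_imp_cont_point[OF path T_pos x_pos x_le_T x(2)]
    by auto
qed

context
  fixes T :: ereal and f :: "ereal \<Rightarrow> real" and fn :: "nat \<Rightarrow> ereal \<Rightarrow> real"
  assumes path: "A_circ_path T f" and paths: "\<And>n. A_circ_path T (fn n)" and T_pos: "0 < T"
    and conv: "\<forall>t\<in>cont_points T f \<union> {T}. (\<lambda>n. fn n t) \<longlonglongrightarrow> f t"
begin

text \<open>Lower semicontinuity of the left limit: it is approached by values at continuity points,
  where the paths converge.\<close>
lemma eventually_less_left_lim: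
  assumes "0 < \<theta>" "\<theta> \<le> T" "c < left_lim T f \<theta>"
  shows "eventually (\<lambda>n. c < left_lim T (fn n) \<theta>) sequentially"
proof -
  have "eventually (\<lambda>s. c < path_ext T f s) (at_left \<theta>)"
    using order_tendstoD(1)[OF tendsto_left_lim[OF path T_pos assms(1,2)] assms(3)] .
  then obtain b where b: "b < \<theta>" "\<And>y. b < y \<Longrightarrow> y < \<theta> \<Longrightarrow> c < path_ext T f y"
    unfolding eventually_at_left[OF assms(1)] by blast
  obtain x where x: "ereal x \<in> cont_points T f" "b < ereal x" "ereal x < \<theta>" "0 < x"
    using cont_point_between[OF path T_pos b(1) assms(1,2)] .
  have "ereal x \<le> T" using x(3) assms(2) by simp
  then have "c < f (ereal x)"
    using b(2)[OF x(2,3)] x(4) path_ext_eq[of "ereal x"] by simp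
  moreover have "(\<lambda>n. fn n (ereal x)) \<longlonglongrightarrow> f (ereal x)" using conv x(1) by blast
  ultimately have "eventually (\<lambda>n. c < fn n (ereal x)) sequentially"
    by (rule order_tendstoD(1)[rotated])
  then show ?thesis
  proof eventually_elim
    case (elim n)
    then show ?case
      using le_left_lim[OF paths T_pos assms(1,2), of "ereal x"] x(3,4) by (simp add: less_le_trans)
  qed
qed

lemma tendsto_left_lim_cont_point:
  assumes "0 < \<theta>" "\<theta> \<le> T" "\<theta> \<in> cont_points T f"
  shows "(\<lambda>n. left_lim T (fn n) \<theta>) \<longlonglongrightarrow> left_lim T f \<theta>"
proof (rule order_tendstoI)
  fix c assume "c < left_lim T f \<theta>"
  then show "eventually (\<lambda>n. c < left_lim T (fn n) \<theta>) sequentially"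
    using eventually_less_left_lim[OF assms(1,2)] by blast
next
  fix c assume "left_lim T f \<theta> < c"
  moreover have "left_lim T f \<theta> = f \<theta>" and "(\<lambda>n. fn n \<theta>) \<longlonglongrightarrow> f \<theta>"
    using assms(3) conv by (auto simp: cont_points_def)
  ultimately have "eventually (\<lambda>n. fn n \<theta> < c) sequentially"
    by (metis order_tendstoD(2))
  then show "eventually (\<lambda>n. left_lim T (fn n) \<theta> < c) sequentially"
    by eventually_elim (use left_lim_le[OF paths T_pos assms(1,2)] in \<open>auto intro: le_less_trans\<close>)
qed

lemma limsup_path_jump_le:
  assumes "0 < \<theta>" "\<theta> \<le> T"
  shows "limsup (\<lambda>n. ereal (fn n T - left_lim T (fn n) \<theta>)) \<le> ereal (f T - left_lim T f \<theta>)"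
  unfolding Limsup_le_iff
proof (intro allI impI)
  fix y assume "ereal (f T - left_lim T f \<theta>) < y"
  then obtain c where c: "f T - left_lim T f \<theta> < c" "ereal c \<le> y"
    using ereal_dense2 by (metis less_imp_le less_ereal.simps(1))
  define e where "e = (c - (f T - left_lim T f \<theta>)) / 2"
  have "0 < e" using c(1) by (simp add: e_def)
  have "(\<lambda>n. fn n T) \<longlonglongrightarrow> f T" using conv by blast
  then have "eventually (\<lambda>n. fn n T < f T + e) sequentially"
    using \<open>0 < e\<close> by (intro order_tendstoD(2)) auto
  moreover have "eventually (\<lambda>n. left_lim T f \<theta> - e < left_lim T (fn n) \<theta>) sequentially"
    using \<open>0 < e\<close> by (intro eventually_less_left_lim assms) auto
  ultimately show "eventually (\<lambda>n. ereal (fn n T - left_lim T (fn n) \<theta>) < y) sequentially"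
  proof eventually_elim
    case (elim n)
    then have "fn n T - left_lim T (fn n) \<theta> < c" by (simp add: e_def field_simps)
    then show ?case using c(2) by (metis less_ereal.simps(1) less_le_trans)
  qed
qed

lemma limsup_ls_int_indicator_atLeast_le:
  assumes "0 < \<theta>" "\<theta> \<le> T" "0 \<le> x"
  shows "limsup (\<lambda>n. ereal (ls_int T (fn n) (\<lambda>t. indicator {\<theta>..} t * x)))
    \<le> ereal (ls_int T f (\<lambda>t. indicator {\<theta>..} t * x))"
proof -
  have "limsup (\<lambda>n. ereal x * ereal (fn n T - left_lim T (fn n) \<theta>))
      = ereal x * limsup (\<lambda>n. ereal (fn n T - left_lim T (fn n) \<theta>))"
    using assms(3) by (rule limsup_ereal_mult_left)
  also have "\<dots> \<le> ereal x * ereal (f T - left_lim T f \<theta>)"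
    using assms(3) limsup_path_jump_le[OF assms(1,2)] by (intro ereal_mult_left_mono) auto
  finally show ?thesis
    using assms(1,2)
    by (simp add: ls_int_indicator_atLeast[OF paths T_pos] ls_int_indicator_atLeast[OF path T_pos])
qed

lemma tendsto_ls_int_indicator_atLeast:
  assumes "0 < \<theta>" "\<theta> \<le> T" "\<theta> \<in> cont_points T f \<or> x = 0"
  shows "(\<lambda>n. ls_int T (fn n) (\<lambda>t. indicator {\<theta>..} t * x)) \<longlonglongrightarrow> ls_int T f (\<lambda>t. indicator {\<theta>..} t * x)"
proof -
  have "(\<lambda>n. x * (fn n T - left_lim T (fn n) \<theta>)) \<longlonglongrightarrow> x * (f T - left_lim T f \<theta>)"
    using assms(3)
  proof
    assume "\<theta> \<in> cont_points T f"
    then show ?thesis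
      using conv assms(1,2) by (intro tendsto_intros tendsto_left_lim_cont_point) auto
  qed simp
  then show ?thesis
    using assms(1,2)
    by (simp add: ls_int_indicator_atLeast[OF paths T_pos] ls_int_indicator_atLeast[OF path T_pos])
qed

end

section \<open>Integration over the sample space\<close>

lemma limsup_integral_le_dominated:
  fixes f :: "nat \<Rightarrow> 'a \<Rightarrow> real"
  assumes g: "integrable M g"
    and f_meas: "\<And>n. f n \<in> borel_measurable M" and h_meas: "h \<in> borel_measurable M"
    and f_bound: "\<And>n. AE x in M. norm (f n x) \<le> g x" and h_bound: "AE x in M. norm (h x) \<le> g x"
    and limsup: "AE x in M. limsup (\<lambda>n. ereal (f n x)) \<le> ereal (h x)"
  shows "limsup (\<lambda>n. ereal (integral\<^sup>L M (f n))) \<le> ereal (integral\<^sup>L M h)"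
proof -
  define w where "w n x = max (f n x) (h x)" for n x
  have "AE x in M. (\<lambda>n. w n x) \<longlonglongrightarrow> h x"
    using limsup
  proof eventually_elim
    case (elim x)
    show ?case unfolding w_def
    proof (rule order_tendstoI)
      fix c assume "h x < c"
      with elim have "eventually (\<lambda>n. ereal (f n x) < ereal c) sequentially"
        by (intro Limsup_lessD) (simp add: le_less_trans)
      then show "eventually (\<lambda>n. max (f n x) (h x) < c) sequentially"
        by eventually_elim (use \<open>h x < c\<close> in simp)
    qed (auto simp: less_max_iff_disj)
  qed
  moreover have w_bound: "AE x in M. norm (w n x) \<le> g x" for n
    using f_bound[of n] h_bound by eventually_elim (auto simp: w_def)
  moreover have w_meas: "w n \<in> borel_measurable M" for n
    unfolding w_def using f_meas h_meas by measurable
  ultimately have "(\<lambda>n. integral\<^sup>L M (w n)) \<longlonglongrightarrow> integral\<^sup>L M h"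
    by (intro integral_dominated_convergence[OF h_meas _ g]) auto
  then have "limsup (\<lambda>n. ereal (integral\<^sup>L M (w n))) = ereal (integral\<^sup>L M h)"
    by (intro lim_imp_Limsup tendsto_ereal) auto
  moreover have "integral\<^sup>L M (f n) \<le> integral\<^sup>L M (w n)" for n
  proof (rule integral_mono_AE)
    show "integrable M (f n)"
      using f_bound[of n] by (intro Bochner_Integration.integrable_bound[OF g f_meas]) auto
    show "integrable M (w n)"
      using w_bound[of n] by (intro Bochner_Integration.integrable_bound[OF g w_meas]) auto
  qed (simp add: w_def)
  then have "limsup (\<lambda>n. ereal (integral\<^sup>L M (f n))) \<le> limsup (\<lambda>n. ereal (integral\<^sup>L M (w n)))"
    by (intro Limsup_mono) auto
  ultimately show ?thesis by simp
qed

lemma A_circ_measurable: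
  assumes "A_circ M T G r" "filtration_on M T G" "t \<in> {0..T}"
  shows "r t \<in> borel_measurable M"
proof (rule measurable_from_subalg)
  show "subalgebra M (G t)"
    using assms(2,3) unfolding filtration_on_def subalgebra_def by auto
  show "r t \<in> borel_measurable (G t)"
    using assms(1,3) unfolding A_circ_def by auto
qed

lemma left_lim_random_time_measurable:
  assumes A: "A_circ M T G r" and filt: "filtration_on M T G" and T_pos: "0 < T"
    and \<theta>_meas: "\<theta> \<in> borel_measurable M"
    and \<theta>_range: "\<And>\<omega>. \<omega> \<in> space M \<Longrightarrow> 0 < \<theta> \<omega>" "\<And>\<omega>. \<omega> \<in> space M \<Longrightarrow> \<theta> \<omega> \<le> T"
  shows "(\<lambda>\<omega>. left_lim T (\<lambda>s. r s \<omega>) (\<theta> \<omega>)) \<in> borel_measurable M"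
proof -
  let ?Q = "{q\<in>\<rat>. 0 \<le> (q::real)}"
  let ?F = "\<lambda>q \<omega>. if ereal q < \<theta> \<omega> then ereal (r (min (ereal q) T) \<omega>) else 0"
  have "?F q \<in> borel_measurable M" if "q \<in> ?Q" for q
  proof -
    have "r (min (ereal q) T) \<in> borel_measurable M"
      using that T_pos by (intro A_circ_measurable[OF A filt]) auto
    then show ?thesis using \<theta>_meas by measurable
  qed
  then have "(\<lambda>\<omega>. real_of_ereal (SUP q\<in>?Q. ?F q \<omega>)) \<in> borel_measurable M"
    using countable_subset[OF _ countable_rat] by measurable
  moreover have "left_lim T (\<lambda>s. r s \<omega>) (\<theta> \<omega>) = real_of_ereal (SUP q\<in>?Q. ?F q \<omega>)"
    if "\<omega> \<in> space M" for \<omega>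
  proof -
    have "ereal (left_lim T (\<lambda>s. r s \<omega>) (\<theta> \<omega>)) = (SUP q\<in>?Q. ?F q \<omega>)"
      using \<theta>_range[OF that] by (rule left_lim_eq_SUP_Rats[OF A_circ_sample_path[OF A] T_pos])
    from arg_cong[OF this, of real_of_ereal] show ?thesis by simp
  qed
  ultimately show ?thesis
    by (subst measurable_cong) auto
qed

lemma ls_int_indicator_atLeast_measurable:
  assumes A: "A_circ M T G r" and filt: "filtration_on M T G" and T_pos: "0 < T"
    and \<theta>_meas: "\<theta> \<in> borel_measurable M"
    and \<theta>_range: "\<And>\<omega>. \<omega> \<in> space M \<Longrightarrow> 0 < \<theta> \<omega>" "\<And>\<omega>. \<omega> \<in> space M \<Longrightarrow> \<theta> \<omega> \<le> T"
    and X_meas: "X \<in> borel_measurable M"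
  shows "(\<lambda>\<omega>. ls_int T (\<lambda>t. r t \<omega>) (\<lambda>t. indicator {\<theta> \<omega>..} t * X \<omega>)) \<in> borel_measurable M"
proof -
  have "r T \<in> borel_measurable M"
    using T_pos by (intro A_circ_measurable[OF A filt]) auto
  then have "(\<lambda>\<omega>. X \<omega> * (r T \<omega> - left_lim T (\<lambda>s. r s \<omega>) (\<theta> \<omega>))) \<in> borel_measurable M"
    using X_meas left_lim_random_time_measurable[OF A filt T_pos \<theta>_meas \<theta>_range] by measurable
  then show ?thesis
    using ls_int_indicator_atLeast[OF A_circ_sample_path[OF A] T_pos] \<theta>_range
    by (subst measurable_cong) auto
qed

context
  fixes M :: "'a measure" and T :: ereal and G :: "ereal \<Rightarrow> 'a measure"
    and \<rho>n :: "nat \<Rightarrow> ereal \<Rightarrow> 'a \<Rightarrow> real" and \<rho> :: "ereal \<Rightarrow> 'a \<Rightarrow> real"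
    and \<theta> :: "'a \<Rightarrow> ereal" and X :: "'a \<Rightarrow> real"
  assumes filt: "filtration_on M T G" and T_pos: "0 < T"
    and rhon: "\<And>n. A_circ M T G (\<rho>n n)" and rho: "A_circ M T G \<rho>"
    and conv: "AE \<omega> in M. \<forall>t \<in> cont_points T (\<lambda>s. \<rho> s \<omega>) \<union> {T}. (\<lambda>n. \<rho>n n t \<omega>) \<longlonglongrightarrow> \<rho> t \<omega>"
    and \<theta>_meas: "\<theta> \<in> borel_measurable M"
    and \<theta>_range: "\<And>\<omega>. \<omega> \<in> space M \<Longrightarrow> 0 < \<theta> \<omega>" "\<And>\<omega>. \<omega> \<in> space M \<Longrightarrow> \<theta> \<omega> \<le> T"
    and X_meas: "X \<in> borel_measurable M" and X_nonneg: "\<And>\<omega>. \<omega> \<in> space M \<Longrightarrow> 0 \<le> X \<omega>"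
    and X_int: "integrable M X"
begin

lemmas ls_int_process_measurable =
  ls_int_indicator_atLeast_measurable[OF _ filt T_pos \<theta>_meas \<theta>_range X_meas]

lemma AE_norm_ls_int_process_le:
  assumes "A_circ M T G r"
  shows "AE \<omega> in M. norm (ls_int T (\<lambda>t. r t \<omega>) (\<lambda>t. indicator {\<theta> \<omega>..} t * X \<omega>)) \<le> X \<omega>"
  using \<theta>_range X_nonneg
  by (intro AE_I2 norm_ls_int_indicator_atLeast_le[OF A_circ_sample_path[OF assms] T_pos])

lemma AE_limsup_ls_int_process_le:
  "AE \<omega> in M. limsup (\<lambda>n. ereal (ls_int T (\<lambda>t. \<rho>n n t \<omega>) (\<lambda>t. indicator {\<theta> \<omega>..} t * X \<omega>)))
     \<le> ereal (ls_int T (\<lambda>t. \<rho> t \<omega>) (\<lambda>t. indicator {\<theta> \<omega>..} t * X \<omega>))"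
  using conv AE_space
proof eventually_elim
  case (elim \<omega>)
  then show ?case
    using A_circ_sample_path[OF rho] A_circ_sample_path[OF rhon] T_pos \<theta>_range X_nonneg
    by (intro limsup_ls_int_indicator_atLeast_le[where fn = "\<lambda>n s. \<rho>n n s \<omega>"])
qed

lemma AE_tendsto_ls_int_process:
  assumes "AE \<omega> in M. \<theta> \<omega> \<in> cont_points T (\<lambda>s. \<rho> s \<omega>) \<or> X \<omega> = 0"
  shows "AE \<omega> in M. (\<lambda>n. ls_int T (\<lambda>t. \<rho>n n t \<omega>) (\<lambda>t. indicator {\<theta> \<omega>..} t * X \<omega>))
    \<longlonglongrightarrow> ls_int T (\<lambda>t. \<rho> t \<omega>) (\<lambda>t. indicator {\<theta> \<omega>..} t * X \<omega>)"
  using conv assms AE_space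
proof eventually_elim
  case (elim \<omega>)
  then show ?case
    using A_circ_sample_path[OF rho] A_circ_sample_path[OF rhon] T_pos \<theta>_range
    by (intro tendsto_ls_int_indicator_atLeast[where fn = "\<lambda>n s. \<rho>n n s \<omega>"])
qed

lemma limsup_integral_ls_int_process_le:
  "limsup (\<lambda>n. ereal (\<integral>\<omega>. ls_int T (\<lambda>t. \<rho>n n t \<omega>) (\<lambda>t. indicator {\<theta> \<omega>..} t * X \<omega>) \<partial>M))
     \<le> ereal (\<integral>\<omega>. ls_int T (\<lambda>t. \<rho> t \<omega>) (\<lambda>t. indicator {\<theta> \<omega>..} t * X \<omega>) \<partial>M)"
  by (rule limsup_integral_le_dominated[OF X_int ls_int_process_measurable[OF rhon]
        ls_int_process_measurable[OF rho] AE_norm_ls_int_process_le[OF rhon]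
        AE_norm_ls_int_process_le[OF rho] AE_limsup_ls_int_process_le])

lemma tendsto_integral_ls_int_process:
  assumes "AE \<omega> in M. \<theta> \<omega> \<in> cont_points T (\<lambda>s. \<rho> s \<omega>) \<or> X \<omega> = 0"
  shows "(\<lambda>n. \<integral>\<omega>. ls_int T (\<lambda>t. \<rho>n n t \<omega>) (\<lambda>t. indicator {\<theta> \<omega>..} t * X \<omega>) \<partial>M)
    \<longlonglongrightarrow> (\<integral>\<omega>. ls_int T (\<lambda>t. \<rho> t \<omega>) (\<lambda>t. indicator {\<theta> \<omega>..} t * X \<omega>) \<partial>M)"
  by (rule integral_dominated_convergence[OF ls_int_process_measurable[OF rho]
        ls_int_process_measurable[OF rhon] X_int AE_tendsto_ls_int_process[OF assms]
        AE_norm_ls_int_process_le[OF rhon]])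

end

theorem mainTheorem18:
  fixes M :: "'a measure" and T :: ereal
    and F G :: "ereal \<Rightarrow> 'a measure"
    and \<rho>n :: "nat \<Rightarrow> ereal \<Rightarrow> 'a \<Rightarrow> real" and \<rho> :: "ereal \<Rightarrow> 'a \<Rightarrow> real"
    and \<theta> :: "'a \<Rightarrow> ereal" and X :: "'a \<Rightarrow> real"
  assumes P: "prob_space M"
    and complete: "\<And>A N. N \<in> null_sets M \<Longrightarrow> A \<subseteq> N \<Longrightarrow> A \<in> sets M"
    and T: "0 < T"
    and filtF: "filtration_on M T F"
    and filtG: "filtration_on M T G"
    and GF: "\<forall>t\<in>{0..T}. sets (G t) \<subseteq> sets (F t)"
    and rhon: "\<And>n. n \<ge> 1 \<Longrightarrow> A_circ M T G (\<rho>n n)"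
    and rho: "A_circ M T G \<rho>"
    and conv: "AE \<omega> in M. \<forall>t \<in> cont_points T (\<lambda>s. \<rho> s \<omega>) \<union> {T}.
                 (\<lambda>n. \<rho>n n t \<omega>) \<longlonglongrightarrow> \<rho> t \<omega>"
    and theta_meas: "\<theta> \<in> borel_measurable M"
    and theta_range: "\<forall>\<omega>\<in>space M. 0 < \<theta> \<omega> \<and> \<theta> \<omega> \<le> T"
    and X_meas: "X \<in> borel_measurable M"
    and X_nonneg: "\<forall>\<omega>\<in>space M. 0 \<le> X \<omega>"
    and X_int: "integrable M X"
  shows "(limsup (\<lambda>n. ereal (\<integral>\<omega>. ls_int T (\<lambda>t. \<rho>n n t \<omega>) (\<lambda>t. indicator {\<theta> \<omega>..} t * X \<omega>) \<partial>M))
           \<le> ereal (\<integral>\<omega>. ls_int T (\<lambda>t. \<rho> t \<omega>) (\<lambda>t. indicator {\<theta> \<omega>..} t * X \<omega>) \<partial>M)) \<and>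
         ((AE \<omega> in M. \<theta> \<omega> \<in> cont_points T (\<lambda>s. \<rho> s \<omega>) \<or> X \<omega> = 0) \<longrightarrow>
         (\<lambda>n. \<integral>\<omega>. ls_int T (\<lambda>t. \<rho>n n t \<omega>) (\<lambda>t. indicator {\<theta> \<omega>..} t * X \<omega>) \<partial>M)
           \<longlonglongrightarrow> (\<integral>\<omega>. ls_int T (\<lambda>t. \<rho> t \<omega>) (\<lambda>t. indicator {\<theta> \<omega>..} t * X \<omega>) \<partial>M))"
proof -
  have rhon_Suc: "A_circ M T G (\<rho>n (Suc n))" for n
    using rhon by simp
  have conv_Suc: "AE \<omega> in M. \<forall>t \<in> cont_points T (\<lambda>s. \<rho> s \<omega>) \<union> {T}.
      (\<lambda>n. \<rho>n (Suc n) t \<omega>) \<longlonglongrightarrow> \<rho> t \<omega>"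
    using conv by eventually_elim (simp add: filterlim_sequentially_Suc[of "\<lambda>n. \<rho>n n _ _"])
  have \<theta>_pos: "0 < \<theta> \<omega>" and \<theta>_le: "\<theta> \<omega> \<le> T" and X_pos: "0 \<le> X \<omega>" if "\<omega> \<in> space M" for \<omega>
    using theta_range X_nonneg that by auto
  note hyps = filtG T rhon_Suc rho conv_Suc theta_meas \<theta>_pos \<theta>_le X_meas X_pos X_int
  have "limsup (\<lambda>n. ereal (\<integral>\<omega>. ls_int T (\<lambda>t. \<rho>n (Suc n) t \<omega>) (\<lambda>t. indicator {\<theta> \<omega>..} t * X \<omega>) \<partial>M))
      \<le> ereal (\<integral>\<omega>. ls_int T (\<lambda>t. \<rho> t \<omega>) (\<lambda>t. indicator {\<theta> \<omega>..} t * X \<omega>) \<partial>M)"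
    by (rule limsup_integral_ls_int_process_le[where \<rho>n = "\<lambda>n. \<rho>n (Suc n)", OF hyps])
  moreover have "(\<lambda>n. \<integral>\<omega>. ls_int T (\<lambda>t. \<rho>n n t \<omega>) (\<lambda>t. indicator {\<theta> \<omega>..} t * X \<omega>) \<partial>M)
      \<longlonglongrightarrow> (\<integral>\<omega>. ls_int T (\<lambda>t. \<rho> t \<omega>) (\<lambda>t. indicator {\<theta> \<omega>..} t * X \<omega>) \<partial>M)"
    if "AE \<omega> in M. \<theta> \<omega> \<in> cont_points T (\<lambda>s. \<rho> s \<omega>) \<or> X \<omega> = 0"
    by (rule LIMSEQ_imp_Suc,
        rule tendsto_integral_ls_int_process[where \<rho>n = "\<lambda>n. \<rho>n (Suc n)", OF hyps that])
  ultimately show ?thesis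
    using limsup_shift[of
        "\<lambda>n. ereal (\<integral>\<omega>. ls_int T (\<lambda>t. \<rho>n n t \<omega>) (\<lambda>t. indicator {\<theta> \<omega>..} t * X \<omega>) \<partial>M)"]
    by simp
qed

end
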